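(* Let $L=2\pi$ and let $A:D(A)\subset L^2(0,L)\to L^2(0,L)$ be defined by $A\varphi=-\varphi_x-\varphi_{xxx}$ with $D(A)=\{\varphi\in H^3(0,L):\varphi(0)=\varphi(L)=\varphi_x(L)=0\}$. Then $\sigma_p(A)\cap i\mathbb R=\{0\}$. Moreover, the kernel of $A$ is $\{a(1-\cos x): a\in\mathbb R\}$.
   Context: Point spectrum is taken for the complexification of $A$. *)

theory Defs
  imports "HOL-Analysis.Analysis"
begin

text \<open>Sobolev space H^3(0,L) in one dimension, described through the
(absolutely continuous) representative: f, f1 = f', f2 = f'' are given as
indefinite integrals of f1, f2, f3 respectively, and f3 = f''' (weak third
derivative) lies in L^2(0,L).\<close>

definition H3_rep :: "real \<Rightarrow> (real \<Rightarrow> 'a::{real_normed_field,banach,second_countable_topology})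
    \<Rightarrow> (real \<Rightarrow> 'a) \<Rightarrow> (real \<Rightarrow> 'a) \<Rightarrow> (real \<Rightarrow> 'a) \<Rightarrow> bool" where
  "H3_rep L f f1 f2 f3 \<longleftrightarrow>
     set_borel_measurable lborel {0..L} f3 \<and>
     set_integrable lborel {0..L} (\<lambda>t. (norm (f3 t))\<^sup>2) \<and>
     (\<forall>x\<in>{0..L}. f2 x = f2 0 + (LINT t:{0..x}|lborel. f3 t)) \<and>
     (\<forall>x\<in>{0..L}. f1 x = f1 0 + (LINT t:{0..x}|lborel. f2 t)) \<and>
     (\<forall>x\<in>{0..L}. f x = f 0 + (LINT t:{0..x}|lborel. f1 t))"

definition A_eig :: "real \<Rightarrow> 'a::{real_normed_field,banach,second_countable_topology}
    \<Rightarrow> (real \<Rightarrow> 'a) \<Rightarrow> bool" where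
  "A_eig L c f \<longleftrightarrow> (\<exists>f1 f2 f3. H3_rep L f f1 f2 f3 \<and> f 0 = 0 \<and> f L = 0 \<and> f1 L = 0 \<and>
      (AE x in lborel. x \<in> {0..L} \<longrightarrow> - f1 x - f3 x = c * f x))"

definition point_spectrum_A :: "real \<Rightarrow> complex set" where
  "point_spectrum_A L = {c. \<exists>f :: real \<Rightarrow> complex.
      \<not> (AE x in lborel. x \<in> {0..L} \<longrightarrow> f x = 0) \<and> A_eig L c f}"

end

theory Submission
  imports Defs "HOL-Computational_Algebra.Fundamental_Theorem_Algebra"
begin

text \<open>An eigenfunction of A is a classical solution of f''' + f' + c f = 0. For Re c = 0 the
energy 2 Re (f'' conj f) - |f'|^2 + |f|^2 is conserved, so the boundary conditions also force
f'(0) = 0. For every root s of s^3 + s = c the quantity e^(s x) (f'' - s f' + (1 + s^2) f) is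
constant, hence e^(2 pi s) f''(2 pi) = f''(0). If f''(0) = 0, two distinct roots u, v give
f' = (u + v) f and thus f = 0. Otherwise the three roots differ by elements of i Z; by Vieta's
formulas their differences k, l satisfy (k + l)^2 + 3 (k - l)^2 = 12, which leaves only c = 0.
For c = 0 the roots 0, i, -i express f'' and f through f''(0) and identify the kernel.\<close>

lemma set_integrable_if_square_integrable:
  fixes f :: "'a \<Rightarrow> 'b::{banach,second_countable_topology}"
  assumes "A \<in> sets M" "emeasure M A < \<infinity>"
    and "set_borel_measurable M A f" "set_integrable M A (\<lambda>x. (norm (f x))\<^sup>2)"
  shows "set_integrable M A f"
proof -
  have "integrable M (\<lambda>x. indicator A x *\<^sub>R (norm (f x))\<^sup>2 + indicator A x *\<^sub>R (1::real))"
    using assms(4) integrableI_bounded_set_indicator[where B=1 and f="\<lambda>_. 1::real", OF assms(1) _ assms(2)]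
    unfolding set_integrable_def by (intro Bochner_Integration.integrable_add) auto
  moreover have "norm (f x) \<le> (norm (f x))\<^sup>2 + 1" for x
    using sum_squares_bound[of "norm (f x)" 1] norm_ge_zero[of "f x"]
    unfolding power2_eq_square by linarith
  then have "norm (indicator A x *\<^sub>R f x)
      \<le> norm (indicator A x *\<^sub>R (norm (f x))\<^sup>2 + indicator A x *\<^sub>R (1::real))" for x
    by (cases "x \<in> A") auto
  ultimately show ?thesis
    using assms(3) unfolding set_integrable_def set_borel_measurable_def
    by (blast intro: Bochner_Integration.integrable_bound)
qed

lemma LINT_atLeastAtMost_eq_integral:
  fixes g :: "real \<Rightarrow> 'a::euclidean_space"
  assumes "set_integrable lborel {a..b} g" "x \<in> {a..b}"
  shows "(LINT t:{a..x}|lborel. g t) = integral {a..x} g"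
  using assms by (intro set_borel_integral_eq_integral(2) set_integrable_subset[OF assms(1)]) auto

lemma continuous_on_indefinite_LINT:
  fixes g F :: "real \<Rightarrow> 'a::euclidean_space"
  assumes "set_integrable lborel {a..b} g" "\<forall>x\<in>{a..b}. F x = F a + (LINT t:{a..x}|lborel. g t)"
  shows "continuous_on {a..b} F"
proof -
  have "continuous_on {a..b} (\<lambda>x. F a + integral {a..x} g)"
    using indefinite_integral_continuous_1[OF set_borel_integral_eq_integral(1)[OF assms(1)]]
    by (intro continuous_intros)
  moreover have "F a + integral {a..x} g = F x" if "x \<in> {a..b}" for x
    unfolding LINT_atLeastAtMost_eq_integral[OF assms(1) that, symmetric]
    using bspec[OF assms(2) that] by (rule sym)
  ultimately show ?thesis
    by (rule continuous_on_eq)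
qed

lemma indefinite_LINT_has_vector_derivative:
  fixes g F :: "real \<Rightarrow> 'a::euclidean_space"
  assumes "continuous_on {a..b} g" "\<forall>x\<in>{a..b}. F x = F a + (LINT t:{a..x}|lborel. g t)"
    and "x \<in> {a..b}"
  shows "(F has_vector_derivative g x) (at x within {a..b})"
proof -
  have "F u = F a + integral {a..u} g" if "u \<in> {a..b}" for u
    unfolding LINT_atLeastAtMost_eq_integral[OF borel_integrable_atLeastAtMost'[OF assms(1)] that, symmetric]
    using bspec[OF assms(2) that] .
  moreover have "((\<lambda>u. F a + integral {a..u} g) has_vector_derivative g x) (at x within {a..b})"
    using integral_has_vector_derivative[OF assms(1,3)] by (auto intro: derivative_eq_intros)
  ultimately show ?thesis
    by (rule has_vector_derivative_transform[OF assms(3)])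
qed

lemma LINT_atLeastAtMost_eq_diff:
  fixes g G :: "real \<Rightarrow> 'a::euclidean_space"
  assumes "a \<le> b" "continuous_on {a..b} g"
    and "\<And>t. t \<in> {a..b} \<Longrightarrow> (G has_vector_derivative g t) (at t within {a..b})"
  shows "(LINT t:{a..b}|lborel. g t) = G b - G a"
  using set_borel_integral_eq_integral(2)[OF borel_integrable_atLeastAtMost'[OF assms(2)]]
    integral_unique[OF fundamental_theorem_of_calculus[OF assms(1,3)]] by simp

definition eigen_ode ::
    "real set \<Rightarrow> 'a::real_normed_field \<Rightarrow> (real \<Rightarrow> 'a) \<Rightarrow> (real \<Rightarrow> 'a) \<Rightarrow> (real \<Rightarrow> 'a) \<Rightarrow> bool"
  where "eigen_ode S c f f1 f2 \<longleftrightarrow> (\<forall>x\<in>S.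
      (f has_vector_derivative f1 x) (at x within S) \<and>
      (f1 has_vector_derivative f2 x) (at x within S) \<and>
      (f2 has_vector_derivative - f1 x - c * f x) (at x within S))"

lemma eigen_ode_if_H3_rep:
  fixes f :: "real \<Rightarrow> 'a::{real_normed_field,euclidean_space}"
  assumes H: "H3_rep L f f1 f2 f3"
    and eq: "AE x in lborel. x \<in> {0..L} \<longrightarrow> - f1 x - f3 x = c * f x"
  shows "eigen_ode {0..L} c f f1 f2"
proof -
  have m3: "set_borel_measurable lborel {0..L} f3"
    and sq3: "set_integrable lborel {0..L} (\<lambda>t. (norm (f3 t))\<^sup>2)"
    and e2: "\<forall>x\<in>{0..L}. f2 x = f2 0 + (LINT t:{0..x}|lborel. f3 t)"
    and e1: "\<forall>x\<in>{0..L}. f1 x = f1 0 + (LINT t:{0..x}|lborel. f2 t)"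
    and e0: "\<forall>x\<in>{0..L}. f x = f 0 + (LINT t:{0..x}|lborel. f1 t)"
    using H unfolding H3_rep_def by argo+
  have i3: "set_integrable lborel {0..L} f3"
    by (rule set_integrable_if_square_integrable[OF _ _ m3 sq3]) (simp_all add: emeasure_lborel_Icc_eq)
  have c2: "continuous_on {0..L} f2"
    using continuous_on_indefinite_LINT[OF i3 e2] .
  have c1: "continuous_on {0..L} f1"
    using continuous_on_indefinite_LINT[OF borel_integrable_atLeastAtMost'[OF c2] e1] .
  have c0: "continuous_on {0..L} f"
    using continuous_on_indefinite_LINT[OF borel_integrable_atLeastAtMost'[OF c1] e0] .
  define g where "g t = - f1 t - c * f t" for t
  have cg: "continuous_on {0..L} g"
    unfolding g_def using c0 c1 by (intro continuous_intros)
  have "f2 x = f2 0 + (LINT t:{0..x}|lborel. g t)" if x: "x \<in> {0..L}" for x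
  proof -
    have "(LINT t:{0..x}|lborel. f3 t) = (LINT t:{0..x}|lborel. g t)"
      unfolding set_lebesgue_integral_def
    proof (rule integral_cong_AE)
      show "(\<lambda>t. indicator {0..x} t *\<^sub>R f3 t) \<in> borel_measurable lborel"
        using set_integrable_subset[OF i3, of "{0..x}"] x
        unfolding set_integrable_def by (auto intro: borel_measurable_integrable)
      show "(\<lambda>t. indicator {0..x} t *\<^sub>R g t) \<in> borel_measurable lborel"
        using borel_integrable_atLeastAtMost'[OF continuous_on_subset[OF cg, of "{0..x}"]] x
        unfolding set_integrable_def by (auto intro: borel_measurable_integrable)
      show "AE t in lborel. indicator {0..x} t *\<^sub>R f3 t = indicator {0..x} t *\<^sub>R g t"
        using eq by eventually_elim (use x in \<open>auto simp: g_def indicator_def algebra_simps\<close>)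
    qed
    with bspec[OF e2 x] show ?thesis by simp
  qed
  then have d2: "(f2 has_vector_derivative g x) (at x within {0..L})" if "x \<in> {0..L}" for x
    using indefinite_LINT_has_vector_derivative[OF cg _ that] by blast
  have d1: "(f1 has_vector_derivative f2 x) (at x within {0..L})" if "x \<in> {0..L}" for x
    using indefinite_LINT_has_vector_derivative[OF c2 e1 that] .
  have d0: "(f has_vector_derivative f1 x) (at x within {0..L})" if "x \<in> {0..L}" for x
    using indefinite_LINT_has_vector_derivative[OF c1 e0 that] .
  show ?thesis
    unfolding eigen_ode_def using d0 d1 d2[unfolded g_def] by blast
qed

lemma H3_rep_if_has_vector_derivative:
  fixes f :: "real \<Rightarrow> 'a::{real_normed_field,euclidean_space}"
  assumes "continuous_on {0..L} f3"
    and "\<And>x. x \<in> {0..L} \<Longrightarrow> (f has_vector_derivative f1 x) (at x within {0..L})"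
    and "\<And>x. x \<in> {0..L} \<Longrightarrow> (f1 has_vector_derivative f2 x) (at x within {0..L})"
    and "\<And>x. x \<in> {0..L} \<Longrightarrow> (f2 has_vector_derivative f3 x) (at x within {0..L})"
  shows "H3_rep L f f1 f2 f3"
proof -
  have cont: "continuous_on {0..L} F"
    if "\<And>x. x \<in> {0..L} \<Longrightarrow> (F has_vector_derivative F' x) (at x within {0..L})"
    for F F' :: "real \<Rightarrow> 'a"
    unfolding continuous_on_eq_continuous_within
    using that by (blast intro: has_vector_derivative_continuous)
  have prim: "F x = F 0 + (LINT t:{0..x}|lborel. F' t)"
    if "continuous_on {0..L} F'" "x \<in> {0..L}"
      and "\<And>x. x \<in> {0..L} \<Longrightarrow> (F has_vector_derivative F' x) (at x within {0..L})"
    for F F' :: "real \<Rightarrow> 'a" and x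
  proof -
    have "(LINT t:{0..x}|lborel. F' t) = F x - F 0"
      using that by (intro LINT_atLeastAtMost_eq_diff continuous_on_subset[OF that(1)]
          has_vector_derivative_within_subset[OF that(3)]) auto
    then show ?thesis by simp
  qed
  have "set_integrable lborel {0..L} f3"
    using assms(1) by (rule borel_integrable_atLeastAtMost')
  then have "set_borel_measurable lborel {0..L} f3"
    unfolding set_borel_measurable_def set_integrable_def by (rule borel_measurable_integrable)
  moreover have "set_integrable lborel {0..L} (\<lambda>t. (norm (f3 t))\<^sup>2)"
    using assms(1) by (intro borel_integrable_atLeastAtMost') (intro continuous_intros)
  moreover have "\<forall>x\<in>{0..L}. f2 x = f2 0 + (LINT t:{0..x}|lborel. f3 t)"
    by (intro ballI prim[OF assms(1) _ assms(4)])
  moreover have "\<forall>x\<in>{0..L}. f1 x = f1 0 + (LINT t:{0..x}|lborel. f2 t)"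
    by (intro ballI prim[OF cont[OF assms(4)] _ assms(3)])
  moreover have "\<forall>x\<in>{0..L}. f x = f 0 + (LINT t:{0..x}|lborel. f1 t)"
    by (intro ballI prim[OF cont[OF assms(3)] _ assms(2)])
  ultimately show ?thesis
    unfolding H3_rep_def by (intro conjI)
qed

lemma has_vector_derivative_zero_imp_eq:
  assumes "convex S" "\<And>x. x \<in> S \<Longrightarrow> (F has_vector_derivative 0) (at x within S)"
    and "x \<in> S" "y \<in> S"
  shows "F x = F y"
  using has_vector_derivative_zero_constant[OF assms(1,2)] assms(3,4) by metis

lemma eigen_ode_deriv_at_0_eq_0:
  fixes f f1 f2 :: "real \<Rightarrow> complex"
  assumes ode: "eigen_ode {0..L} c f f1 f2" and "Re c = 0" "0 \<le> L"
    and "f 0 = 0" "f L = 0" "f1 L = 0"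
  shows "f1 0 = 0"
proof -
  define W where "W x = 2 * Re (f2 x * cnj (f x)) - (cmod (f1 x))\<^sup>2 + (cmod (f x))\<^sup>2" for x
  have "cnj c = - c" using \<open>Re c = 0\<close> by (simp add: complex_eq_iff)
  have "((\<lambda>x. complex_of_real (W x)) has_vector_derivative 0) (at x within {0..L})" if "x \<in> {0..L}" for x
  proof -
    have "((\<lambda>x. f2 x * cnj (f x) + cnj (f2 x) * f x - f1 x * cnj (f1 x) + f x * cnj (f x))
        has_vector_derivative
          f2 x * cnj (f1 x) + (- f1 x - c * f x) * cnj (f x)
          + (cnj (f2 x) * f1 x + cnj (- f1 x - c * f x) * f x)
          - (f1 x * cnj (f2 x) + f2 x * cnj (f1 x))
          + (f x * cnj (f1 x) + f1 x * cnj (f x))) (at x within {0..L})"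
      using ode that unfolding eigen_ode_def
      by (intro has_vector_derivative_add has_vector_derivative_diff has_vector_derivative_mult
          has_vector_derivative_cnj) auto
    moreover have "(\<lambda>x. f2 x * cnj (f x) + cnj (f2 x) * f x - f1 x * cnj (f1 x) + f x * cnj (f x))
        = (\<lambda>x. complex_of_real (W x))"
      by (auto simp: W_def complex_eq_iff power2_eq_square cmod_def)
    ultimately show ?thesis
      using \<open>cnj c = - c\<close> by (simp add: algebra_simps)
  qed
  then have "of_real (W 0) = (of_real (W L) :: complex)"
    using \<open>0 \<le> L\<close> by (intro has_vector_derivative_zero_imp_eq[of "{0..L}"]) auto
  then show ?thesis
    using assms(4-6) by (simp add: W_def)
qed

lemma eigen_ode_exp_invariant:
  fixes f f1 f2 :: "real \<Rightarrow> complex"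
  assumes ode: "eigen_ode {0..L} c f f1 f2" and root: "s ^ 3 + s = c" and x: "x \<in> {0..L}"
  shows "exp (x *\<^sub>R s) * (f2 x - s * f1 x + (1 + s\<^sup>2) * f x) = f2 0 - s * f1 0 + (1 + s\<^sup>2) * f 0"
proof -
  \<comment> \<open>with g = f2 - s f1 + (1 + s^2) f one has g' + s g = f''' + f' + (s^3 + s) f = 0\<close>
  define H where "H x = exp (x *\<^sub>R s) * (f2 x - s * f1 x + (1 + s\<^sup>2) * f x)" for x
  have "(H has_vector_derivative 0) (at y within {0..L})" if y: "y \<in> {0..L}" for y
  proof -
    have "(H has_vector_derivative
          exp (y *\<^sub>R s) * ((- f1 y - c * f y) - s * f2 y + (1 + s\<^sup>2) * f1 y)
          + exp (y *\<^sub>R s) * s * (f2 y - s * f1 y + (1 + s\<^sup>2) * f y)) (at y within {0..L})"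
      unfolding H_def using ode y unfolding eigen_ode_def
      by (intro has_vector_derivative_add has_vector_derivative_diff has_vector_derivative_mult
          has_vector_derivative_mult_right exp_scaleR_has_vector_derivative_right) auto
    moreover have "exp (y *\<^sub>R s) * ((- f1 y - c * f y) - s * f2 y + (1 + s\<^sup>2) * f1 y)
          + exp (y *\<^sub>R s) * s * (f2 y - s * f1 y + (1 + s\<^sup>2) * f y) = 0"
      unfolding root[symmetric] by (simp add: algebra_simps power2_eq_square power3_eq_cube)
    ultimately show ?thesis by simp
  qed
  then have "H x = H 0"
    using x by (intro has_vector_derivative_zero_imp_eq[of "{0..L}"]) auto
  then show ?thesis by (simp add: H_def)
qed

lemma cubic_roots:
  fixes c :: complex
  obtains s1 s2 s3 where "s1 ^ 3 + s1 = c" "s2 ^ 3 + s2 = c" "s3 ^ 3 + s3 = c"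
    and "s2 + s3 = - s1" "s2 * s3 = s1\<^sup>2 + 1"
proof -
  obtain s1 where "poly [:- c, 1, 0, 1:] s1 = 0"
    using fundamental_theorem_of_algebra_alt[of "[:- c, 1, 0, 1:]"] by (auto simp: pCons_eq_iff)
  then have s1: "s1 ^ 3 + s1 = c"
    by (simp add: algebra_simps power3_eq_cube)
  define r where "r = csqrt (- 3 * s1\<^sup>2 - 4)"
  have r: "r\<^sup>2 = - 3 * s1\<^sup>2 - 4"
    unfolding r_def by simp
  define s2 s3 where "s2 = (- s1 + r) / 2" and "s3 = (- s1 - r) / 2"
  have sum: "s2 + s3 = - s1" and prod: "s2 * s3 = s1\<^sup>2 + 1"
    unfolding s2_def s3_def using r by (simp_all add: field_simps power2_eq_square)
  have "t ^ 3 + t = c" if "t + u = - s1" "t * u = s1\<^sup>2 + 1" for t u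
  proof -
    have "t ^ 3 + t - (s1 ^ 3 + s1) = (t - s1) * (t * (t + s1 + u) - (t * u - s1\<^sup>2 - 1))"
      by (simp add: algebra_simps power2_eq_square power3_eq_cube)
    also have "\<dots> = 0"
      using that by (simp add: algebra_simps)
    finally show ?thesis using s1 by simp
  qed
  then show ?thesis
    using that s1 sum prod by (metis add.commute mult.commute)
qed

lemma eigen_ode_eq_0_if_initial_eq_0:
  fixes f f1 f2 :: "real \<Rightarrow> complex"
  assumes ode: "eigen_ode {0..L} c f f1 f2" and "f 0 = 0" "f1 0 = 0" "f2 0 = 0"
    and x: "x \<in> {0..L}"
  shows "f x = 0"
proof -
  obtain u v where uv: "u \<noteq> v" "u ^ 3 + u = c" "v ^ 3 + v = c"
  proof -
    obtain s1 s2 s3 where "s1 ^ 3 + s1 = c" "s2 ^ 3 + s2 = c" "s3 ^ 3 + s3 = c"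
      and "s2 + s3 = - s1" "s2 * s3 = s1\<^sup>2 + 1"
      by (rule cubic_roots)
    moreover have "s1 \<noteq> s2 \<or> s1 \<noteq> s3"
      using \<open>s2 + s3 = - s1\<close> \<open>s2 * s3 = s1\<^sup>2 + 1\<close> by auto
    ultimately show ?thesis using that by blast
  qed
  have Z: "f2 y - s * f1 y + (1 + s\<^sup>2) * f y = 0" if "s ^ 3 + s = c" "y \<in> {0..L}" for s y
    using eigen_ode_exp_invariant[OF ode that] assms(2-4) by simp
  have f1_eq: "f1 y = (u + v) * f y" if "y \<in> {0..L}" for y
  proof -
    have "(v - u) * (f1 y - (u + v) * f y)
        = (f2 y - u * f1 y + (1 + u\<^sup>2) * f y) - (f2 y - v * f1 y + (1 + v\<^sup>2) * f y)"
      by (simp add: algebra_simps power2_eq_square)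
    also have "\<dots> = 0" using Z uv that by simp
    finally show ?thesis using uv(1) by simp
  qed
  define K where "K y = exp (y *\<^sub>R (- (u + v))) * f y" for y
  have "(K has_vector_derivative 0) (at y within {0..L})" if y: "y \<in> {0..L}" for y
  proof -
    have "(K has_vector_derivative
        exp (y *\<^sub>R (- (u + v))) * f1 y + exp (y *\<^sub>R (- (u + v))) * (- (u + v)) * f y) (at y within {0..L})"
      unfolding K_def using ode y unfolding eigen_ode_def
      by (intro has_vector_derivative_mult exp_scaleR_has_vector_derivative_right) auto
    then show ?thesis using f1_eq[OF y] by (simp add: algebra_simps)
  qed
  then have "K x = K 0"
    using x by (intro has_vector_derivative_zero_imp_eq[of "{0..L}"]) auto
  then show ?thesis using \<open>f 0 = 0\<close> by (simp add: K_def)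
qed

lemma int_sq_plus_3_sq_eq_12:
  fixes m d :: int
  assumes "m\<^sup>2 + 3 * d\<^sup>2 = 12"
  shows "m = 0 \<or> m\<^sup>2 = 9"
proof -
  have "m\<^sup>2 < 16" "d\<^sup>2 < 9"
    using assms zero_le_power2[of m] zero_le_power2[of d] by linarith+
  then have "\<bar>m\<bar>\<^sup>2 < 4\<^sup>2" "\<bar>d\<bar>\<^sup>2 < 3\<^sup>2"
    by simp_all
  then have "\<bar>m\<bar> < 4" "\<bar>d\<bar> < 3"
    by (auto intro: power2_less_imp_less)
  then have "m \<in> {-3, -2, -1, 0, 1, 2, 3}" "d \<in> {-2, -1, 0, 1, 2}"
    by auto
  then show ?thesis
    using assms by auto
qed

lemma cubic_roots_lattice_imp_eq_0:
  fixes s1 s2 s3 :: complex and k l :: int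
  assumes "s2 + s3 = - s1" "s2 * s3 = s1\<^sup>2 + 1"
    and "s1 - s2 = \<i> * of_int k" "s1 - s3 = \<i> * of_int l"
  shows "s1 ^ 3 + s1 = 0"
proof -
  define K M :: complex where "K = of_int k" and "M = of_int l"
  have s2: "s2 = s1 - \<i> * K" and s3: "s3 = s1 - \<i> * M"
    using assms(3,4) unfolding K_def M_def by (simp_all add: algebra_simps)
  have sum: "3 * s1 = \<i> * (K + M)"
    using assms(1) s2 s3 by (simp add: algebra_simps)
  have "\<i> * (K + M) * s1 + K * M + 1 = 0"
    using assms(2) unfolding s2 s3 by (simp add: algebra_simps power2_eq_square)
  then have "0 = 3 * (\<i> * (K + M) * s1 + K * M + 1)"
    by simp
  also have "\<dots> = \<i> * (K + M) * (3 * s1) + 3 * K * M + 3"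
    by (simp add: algebra_simps)
  also have "\<dots> = 3 - (K\<^sup>2 - K * M + M\<^sup>2)"
    unfolding sum by (simp add: algebra_simps power2_eq_square)
  finally have "K\<^sup>2 - K * M + M\<^sup>2 = 3"
    by simp
  have "of_int ((k + l)\<^sup>2 + 3 * (k - l)\<^sup>2) = 4 * (K\<^sup>2 - K * M + M\<^sup>2)"
    unfolding K_def M_def by (simp add: algebra_simps power2_eq_square)
  also have "\<dots> = of_int 12"
    unfolding \<open>K\<^sup>2 - K * M + M\<^sup>2 = 3\<close> by simp
  finally have "k + l = 0 \<or> (k + l)\<^sup>2 = 9"
    by (intro int_sq_plus_3_sq_eq_12) (simp only: of_int_eq_iff)
  then have "(k + l) * (9 - (k + l)\<^sup>2) = 0"
    by auto
  have "27 * (s1 ^ 3 + s1) = (3 * s1) ^ 3 + 9 * (3 * s1)"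
    by (simp add: algebra_simps power3_eq_cube)
  also have "\<dots> = \<i> * of_int ((k + l) * (9 - (k + l)\<^sup>2))"
    unfolding sum K_def M_def by (simp add: algebra_simps power3_eq_cube power2_eq_square)
  also have "\<dots> = 0"
    by (simp add: \<open>(k + l) * (9 - (k + l)\<^sup>2) = 0\<close>)
  finally show ?thesis
    by (metis mult_eq_0_iff zero_neq_numeral)
qed

lemma exp_2pi_scaleR_eq_imp_diff_in_Ints:
  fixes s t :: complex
  assumes "exp ((2 * pi) *\<^sub>R s) = exp ((2 * pi) *\<^sub>R t)"
  obtains n :: int where "s - t = \<i> * of_int n"
proof -
  obtain n :: int where "(2 * pi) *\<^sub>R s = (2 * pi) *\<^sub>R t + of_int (2 * n) * pi * \<i>"
    using assms exp_eq by blast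
  then have "(2 * pi) *\<^sub>R (s - t) = (2 * pi) *\<^sub>R (\<i> * of_int n)"
    by (simp add: scaleR_diff_right algebra_simps scaleR_conv_of_real)
  then show ?thesis
    using that by simp
qed

lemma eigen_ode_imaginary_eigenvalue_eq_0:
  fixes f f1 f2 :: "real \<Rightarrow> complex"
  assumes ode: "eigen_ode {0..2 * pi} c f f1 f2" and "Re c = 0"
    and bc: "f 0 = 0" "f (2 * pi) = 0" "f1 (2 * pi) = 0"
    and nz: "x \<in> {0..2 * pi}" "f x \<noteq> 0"
  shows "c = 0"
proof -
  have "f1 0 = 0"
    using eigen_ode_deriv_at_0_eq_0[OF ode \<open>Re c = 0\<close>] bc by simp
  have exp_f2: "exp ((2 * pi) *\<^sub>R s) * f2 (2 * pi) = f2 0" if "s ^ 3 + s = c" for s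
    using eigen_ode_exp_invariant[OF ode that, of "2 * pi"] bc \<open>f1 0 = 0\<close> by simp
  have "f2 0 \<noteq> 0"
    using eigen_ode_eq_0_if_initial_eq_0[OF ode bc(1) \<open>f1 0 = 0\<close> _ nz(1)] nz(2) by blast
  obtain s1 s2 s3 where roots: "s1 ^ 3 + s1 = c" "s2 ^ 3 + s2 = c" "s3 ^ 3 + s3 = c"
    and vieta: "s2 + s3 = - s1" "s2 * s3 = s1\<^sup>2 + 1"
    by (rule cubic_roots)
  have "f2 (2 * pi) \<noteq> 0"
    using exp_f2[OF roots(1)] \<open>f2 0 \<noteq> 0\<close> by auto
  then have exp_eq_ratio: "exp ((2 * pi) *\<^sub>R s) = f2 0 / f2 (2 * pi)" if "s ^ 3 + s = c" for s
    using exp_f2[OF that] by (simp add: field_simps)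
  obtain k l :: int where "s1 - s2 = \<i> * of_int k" "s1 - s3 = \<i> * of_int l"
    using exp_eq_ratio[OF roots(1)] exp_eq_ratio[OF roots(2)] exp_eq_ratio[OF roots(3)]
    by (metis exp_2pi_scaleR_eq_imp_diff_in_Ints)
  then show ?thesis
    using cubic_roots_lattice_imp_eq_0[OF vieta] roots(1) by simp
qed

lemma eigen_ode_kernel:
  fixes f f1 f2 :: "real \<Rightarrow> complex"
  assumes ode: "eigen_ode {0..L} 0 f f1 f2" and "f 0 = 0" "f1 0 = 0" and x: "x \<in> {0..L}"
  shows "f x = f2 0 * (1 - cos (of_real x))"
proof -
  have inv: "exp (x *\<^sub>R s) * (f2 x - s * f1 x + (1 + s\<^sup>2) * f x) = f2 0" if "s ^ 3 + s = 0" for s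
    using eigen_ode_exp_invariant[OF ode that x] assms(2,3) by simp
  have sum: "f2 x + f x = f2 0"
    using inv[of 0] by simp
  have minus: "f2 x - \<i> * f1 x = f2 0 * exp (- (\<i> * of_real x))"
    using inv[of \<i>] by (simp add: power3_eq_cube scaleR_conv_of_real exp_minus field_simps)
  have plus: "f2 x + \<i> * f1 x = f2 0 * exp (\<i> * of_real x)"
    using inv[of "- \<i>"] by (simp add: power3_eq_cube scaleR_conv_of_real exp_minus field_simps)
  have "2 * f2 x = f2 0 * (exp (\<i> * of_real x) + exp (- (\<i> * of_real x)))"
    using arg_cong2[OF minus plus, of "(+)"] by (simp add: algebra_simps)
  then have "f2 x = f2 0 * cos (of_real x)"
    unfolding cos_exp_eq by (simp add: field_simps)
  with sum show ?thesis
    by (simp add: algebra_simps)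
qed

lemma eigen_ode_of_real:
  fixes f f1 f2 :: "real \<Rightarrow> real"
  assumes "eigen_ode S c f f1 f2"
  shows "eigen_ode S (complex_of_real c)
      (\<lambda>x. of_real (f x)) (\<lambda>x. of_real (f1 x)) (\<lambda>x. of_real (f2 x))"
  unfolding eigen_ode_def
proof (intro ballI conjI)
  fix x assume "x \<in> S"
  then have d: "(f has_real_derivative f1 x) (at x within S)"
      "(f1 has_real_derivative f2 x) (at x within S)"
      "(f2 has_real_derivative - f1 x - c * f x) (at x within S)"
    using assms unfolding eigen_ode_def has_real_derivative_iff_has_vector_derivative by blast+
  show "((\<lambda>x. complex_of_real (f x)) has_vector_derivative of_real (f1 x)) (at x within S)"
    using has_vector_derivative_of_real[OF d(1)] .
  show "((\<lambda>x. complex_of_real (f1 x)) has_vector_derivative of_real (f2 x)) (at x within S)"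
    using has_vector_derivative_of_real[OF d(2)] .
  show "((\<lambda>x. complex_of_real (f2 x)) has_vector_derivative
      - of_real (f1 x) - of_real c * of_real (f x)) (at x within S)"
    using has_vector_derivative_of_real[OF d(3)] by simp
qed

lemma A_eig_one_minus_cos:
  fixes f :: "real \<Rightarrow> 'a::{real_normed_field,euclidean_space}"
  assumes f: "\<forall>x\<in>{0..2 * pi}. f x = of_real (a * (1 - cos x))"
  shows "A_eig (2 * pi) 0 f"
proof -
  let ?f1 = "\<lambda>x. of_real (a * sin x) :: 'a"
  let ?f2 = "\<lambda>x. of_real (a * cos x) :: 'a"
  let ?f3 = "\<lambda>x. of_real (- a * sin x) :: 'a"
  have "H3_rep (2 * pi) f ?f1 ?f2 ?f3"
  proof (rule H3_rep_if_has_vector_derivative)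
    show "continuous_on {0..2 * pi} ?f3"
      by (intro continuous_intros)
    fix x assume x: "x \<in> {0..2 * pi}"
    have "((\<lambda>x. a * (1 - cos x)) has_real_derivative a * sin x) (at x within {0..2 * pi})"
      "((\<lambda>x. a * sin x) has_real_derivative a * cos x) (at x within {0..2 * pi})"
      "((\<lambda>x. a * cos x) has_real_derivative - a * sin x) (at x within {0..2 * pi})"
      by (auto intro!: derivative_eq_intros)
    note d = this[THEN has_vector_derivative_of_real[where 'a='a]]
    show "(f has_vector_derivative ?f1 x) (at x within {0..2 * pi})"
      using f by (intro has_vector_derivative_transform[OF x _ d(1)]) auto
    show "(?f1 has_vector_derivative ?f2 x) (at x within {0..2 * pi})"
      using d(2) .
    show "(?f2 has_vector_derivative ?f3 x) (at x within {0..2 * pi})"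
      using d(3) .
  qed
  moreover have "f 0 = 0" "f (2 * pi) = 0"
    using f by auto
  ultimately show ?thesis
    unfolding A_eig_def by (intro exI[of _ ?f1] exI[of _ ?f2] exI[of _ ?f3]) simp
qed

lemma not_AE_one_minus_cos_eq_0:
  "\<not> (AE x in lborel. x \<in> {0..2 * pi} \<longrightarrow> complex_of_real (1 - cos x) = 0)"
proof
  assume "AE x in lborel. x \<in> {0..2 * pi} \<longrightarrow> complex_of_real (1 - cos x) = 0"
  then obtain N where N: "{x. \<not> (x \<in> {0..2 * pi} \<longrightarrow> complex_of_real (1 - cos x) = 0)} \<subseteq> N"
    "emeasure lborel N = 0" "N \<in> sets lborel"
    by (auto elim: AE_E)
  have "{1..2} \<subseteq> N"
  proof
    fix x :: real assume x: "x \<in> {1..2}"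
    then have "cos x < cos 0"
      using pi_gt3 by (subst cos_mono_less_eq) auto
    then show "x \<in> N"
      using N(1) x pi_gt3 by auto
  qed
  then have "emeasure lborel {1..2::real} \<le> emeasure lborel N"
    by (rule emeasure_mono[OF _ N(3)])
  then show False
    using N(2) by simp
qed

lemma imaginary_point_spectrum_subset:
  "point_spectrum_A (2 * pi) \<inter> {c. Re c = 0} \<subseteq> {0}"
proof
  fix c assume "c \<in> point_spectrum_A (2 * pi) \<inter> {c. Re c = 0}"
  then obtain f f1 f2 f3 :: "real \<Rightarrow> complex"
    where nonzero: "\<not> (AE x in lborel. x \<in> {0..2 * pi} \<longrightarrow> f x = 0)"
      and H: "H3_rep (2 * pi) f f1 f2 f3" and bc: "f 0 = 0" "f (2 * pi) = 0" "f1 (2 * pi) = 0"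
      and eq: "AE x in lborel. x \<in> {0..2 * pi} \<longrightarrow> - f1 x - f3 x = c * f x"
      and "Re c = 0"
    unfolding point_spectrum_A_def A_eig_def by blast
  have "\<exists>x\<in>{0..2 * pi}. f x \<noteq> 0"
  proof (rule ccontr)
    assume "\<not> (\<exists>x\<in>{0..2 * pi}. f x \<noteq> 0)"
    then have "AE x in lborel. x \<in> {0..2 * pi} \<longrightarrow> f x = 0"
      by (intro AE_I2) auto
    with nonzero show False ..
  qed
  then show "c \<in> {0}"
    using eigen_ode_imaginary_eigenvalue_eq_0[OF eigen_ode_if_H3_rep[OF H eq] \<open>Re c = 0\<close> bc]
    by blast
qed

lemma zero_in_point_spectrum: "0 \<in> point_spectrum_A (2 * pi)"
proof -
  have "A_eig (2 * pi) 0 (\<lambda>x. complex_of_real (1 - cos x))"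
    by (rule A_eig_one_minus_cos[where a = 1]) simp
  with not_AE_one_minus_cos_eq_0 show ?thesis
    unfolding point_spectrum_A_def mem_Collect_eq
    by (intro exI[of _ "\<lambda>x. complex_of_real (1 - cos x)"] conjI)
qed

lemma A_eig_0_real_imp_one_minus_cos:
  fixes f :: "real \<Rightarrow> real"
  assumes "A_eig (2 * pi) 0 f"
  obtains a where "\<forall>x\<in>{0..2 * pi}. f x = a * (1 - cos x)"
proof -
  obtain f1 f2 f3 where H: "H3_rep (2 * pi) f f1 f2 f3" and bc: "f 0 = 0" "f (2 * pi) = 0" "f1 (2 * pi) = 0"
    and eq: "AE x in lborel. x \<in> {0..2 * pi} \<longrightarrow> - f1 x - f3 x = 0 * f x"
    using assms unfolding A_eig_def by blast
  have ode: "eigen_ode {0..2 * pi} 0 (\<lambda>x. complex_of_real (f x))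
      (\<lambda>x. of_real (f1 x)) (\<lambda>x. of_real (f2 x))"
    using eigen_ode_of_real[OF eigen_ode_if_H3_rep[OF H eq]] by simp
  have "complex_of_real (f1 0) = 0"
    using bc by (intro eigen_ode_deriv_at_0_eq_0[OF ode]) auto
  then have "complex_of_real (f x) = of_real (f2 0 * (1 - cos x))" if "x \<in> {0..2 * pi}" for x
    using eigen_ode_kernel[OF ode _ _ that] bc by (simp add: cos_of_real)
  then have "\<forall>x\<in>{0..2 * pi}. f x = f2 0 * (1 - cos x)"
    by (metis of_real_eq_iff)
  then show ?thesis ..
qed

theorem lemma2p6:
  shows "point_spectrum_A (2 * pi) \<inter> {c. Re c = 0} = {0} \<and>
         (\<forall>f :: real \<Rightarrow> real. A_eig (2 * pi) 0 f \<longleftrightarrow>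
           (\<exists>a::real. \<forall>x\<in>{0..2 * pi}. f x = a * (1 - cos x)))"
proof (intro conjI allI iffI)
  show "point_spectrum_A (2 * pi) \<inter> {c. Re c = 0} = {0}"
    using imaginary_point_spectrum_subset zero_in_point_spectrum by auto
  fix f :: "real \<Rightarrow> real"
  show "\<exists>a. \<forall>x\<in>{0..2 * pi}. f x = a * (1 - cos x)" if "A_eig (2 * pi) 0 f"
    using A_eig_0_real_imp_one_minus_cos[OF that] by blast
  show "A_eig (2 * pi) 0 f" if "\<exists>a. \<forall>x\<in>{0..2 * pi}. f x = a * (1 - cos x)"
    using that by (auto intro: A_eig_one_minus_cos)
qed

end
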